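(* Let $IS\in\{\Box,\blacksquare\}^2$. There is no correct compositional translation from $\mathrm{SYNCSIMPLE}$ into $\mathrm{LOCKSIMPLE}_{2,IS}$ of blocking type $(P_1,P_2)$.
   Context: $\mathrm{SYNCSIMPLE}$: subprocesses $\mathcal{U} ::= \checkmark \mid 0 \mid\, !\mathcal{U} \mid\, ?\mathcal{U}$; processes are finite parallel compositions ($\mid$ associative, commutative, $0$ a unit). Reduction: $!\mathcal{U}_1\mid ?\mathcal{U}_2\mid \mathcal{P}\to \mathcal{U}_1\mid\mathcal{U}_2\mid\mathcal{P}$. Successful: of form $\checkmark\mid\mathcal{P}$; may-convergent: reduces to a successful process; must-convergent: every reachable process is may-convergent. $\mathrm{LOCKSIMPLE}_{k,IS}$ ($IS\in\{\Box,\blacksquare\}^k$, $\Box$ empty, $\blacksquare$ full): subprocesses are words over $\{P_1,T_1,\dots,P_k,T_k\}$ followed by $0$ or $\checkmark$; states $(\mathcal{P},C)$ reduce by $(P_i\mathcal{U}\mid\mathcal{P},C)\to(\mathcal{U}\mid\mathcal{P},C[C_i:=\blacksquare])$ only if $C_i=\Box$, and $(T_i\mathcal{U}\mid\mathcal{P},C)\to(\mathcal{U}\mid\mathcal{P},C[C_i:=\Box])$ always. Success = process contains $\checkmark$; a process $\mathcal{P}$ is may/must-convergent iff the state $(\mathcal{P},IS)$ is. A compositional translation $\tau$ is given by words $\tau(!),\tau(?)$ with $\tau(0)=0$, $\tau(\checkmark)=\checkmark$, $\tau(!\mathcal{U})=\tau(!)\tau(\mathcal{U})$, $\tau(?\mathcal{U})=\tau(?)\tau(\mathcal{U})$,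 $\tau$ commuting with $\mid$; correct = preserves and reflects may- and must-convergence. Blocking type: for a word $S$, run $S$ as a single subprocess from $IS$; if it gets stuck at an occurrence of $P_i$ which is the first symbol from $\{P_i,T_i\}$ in $S$, the blocking type of $S$ is $P_i$; if it gets stuck at a later occurrence of $P_i$ the type is $P_iP_i$. $\tau$ has blocking type $(W_1,W_2)$ if $\tau(!)$ has type $W_1$ and $\tau(?)$ type $W_2$. *)

theory Defs
  imports Main "HOL-Library.Multiset"
begin

datatype ssub = SCheck | SZero | SSend ssub | SRecv ssub

type_synonym sproc = "ssub multiset"  (* finite parallel composition *)

inductive sync_step :: "sproc \<Rightarrow> sproc \<Rightarrow> bool" where
  "sync_step (add_mset (SSend u1) (add_mset (SRecv u2) P)) (add_mset u1 (add_mset u2 P))"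

definition sync_successful :: "sproc \<Rightarrow> bool" where
  "sync_successful P \<longleftrightarrow> SCheck \<in># P"

definition sync_may :: "sproc \<Rightarrow> bool" where
  "sync_may P \<longleftrightarrow> (\<exists>Q. sync_step\<^sup>*\<^sup>* P Q \<and> sync_successful Q)"

definition sync_must :: "sproc \<Rightarrow> bool" where
  "sync_must P \<longleftrightarrow> (\<forall>Q. sync_step\<^sup>*\<^sup>* P Q \<longrightarrow> sync_may Q)"

text \<open>Lock operations P_i and T_i, with indices i in 1..k.
  Lock configurations are lists of length k; entry i-1 describes lock i;
  True = full (filled square), False = empty (empty square).\<close>

datatype lact = LP nat | LT nat

fun lidx :: "lact \<Rightarrow> nat" where
  "lidx (LP i) = i" | "lidx (LT i) = i"

definition valid_word :: "nat \<Rightarrow> lact list \<Rightarrow> bool" where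
  "valid_word k w \<longleftrightarrow> (\<forall>a\<in>set w. 1 \<le> lidx a \<and> lidx a \<le> k)"

datatype lend = LZero | LCheck

type_synonym lsub = "lact list \<times> lend"
type_synonym lproc = "lsub multiset"
type_synonym lstate = "lproc \<times> bool list"

inductive lock_step :: "lstate \<Rightarrow> lstate \<Rightarrow> bool" where
  lock_P: "\<not> C ! (i - 1) \<Longrightarrow>
     lock_step (add_mset (LP i # w, e) M, C) (add_mset (w, e) M, C[i - 1 := True])"
| lock_T: "lock_step (add_mset (LT i # w, e) M, C) (add_mset (w, e) M, C[i - 1 := False])"

definition lock_successful :: "lstate \<Rightarrow> bool" where
  "lock_successful S \<longleftrightarrow> ([], LCheck) \<in># fst S"

definition lock_may_state :: "lstate \<Rightarrow> bool" where
  "lock_may_state S \<longleftrightarrow> (\<exists>S'. lock_step\<^sup>*\<^sup>* S S' \<and> lock_successful S')"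

definition lock_must_state :: "lstate \<Rightarrow> bool" where
  "lock_must_state S \<longleftrightarrow> (\<forall>S'. lock_step\<^sup>*\<^sup>* S S' \<longrightarrow> lock_may_state S')"

definition lock_may :: "bool list \<Rightarrow> lproc \<Rightarrow> bool" where
  "lock_may IS P \<longleftrightarrow> lock_may_state (P, IS)"

definition lock_must :: "bool list \<Rightarrow> lproc \<Rightarrow> bool" where
  "lock_must IS P \<longleftrightarrow> lock_must_state (P, IS)"

fun tr_sub :: "lact list \<Rightarrow> lact list \<Rightarrow> ssub \<Rightarrow> lsub" where
  "tr_sub w1 w2 SZero = ([], LZero)"
| "tr_sub w1 w2 SCheck = ([], LCheck)"
| "tr_sub w1 w2 (SSend u) = (w1 @ fst (tr_sub w1 w2 u), snd (tr_sub w1 w2 u))"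
| "tr_sub w1 w2 (SRecv u) = (w2 @ fst (tr_sub w1 w2 u), snd (tr_sub w1 w2 u))"

definition tr_proc :: "lact list \<Rightarrow> lact list \<Rightarrow> sproc \<Rightarrow> lproc" where
  "tr_proc w1 w2 P = image_mset (tr_sub w1 w2) P"

text \<open>The translation given by tau(!) = w1, tau(?) = w2 into LOCKSIMPLE_{k,IS}.\<close>
definition compositional_translation :: "nat \<Rightarrow> lact list \<Rightarrow> lact list \<Rightarrow> bool" where
  "compositional_translation k w1 w2 \<longleftrightarrow> valid_word k w1 \<and> valid_word k w2"

definition correct_translation :: "bool list \<Rightarrow> lact list \<Rightarrow> lact list \<Rightarrow> bool" where
  "correct_translation IS w1 w2 \<longleftrightarrow>
     (\<forall>P. (sync_may P \<longleftrightarrow> lock_may IS (tr_proc w1 w2 P))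
        \<and> (sync_must P \<longleftrightarrow> lock_must IS (tr_proc w1 w2 P)))"

text \<open>Running a word as a single subprocess from lock configuration C:
  Some n means execution gets stuck at position n (a P_i with lock i full);
  None means the word runs to completion.\<close>
fun stuck_pos :: "bool list \<Rightarrow> lact list \<Rightarrow> nat option" where
  "stuck_pos C [] = None"
| "stuck_pos C (LP i # w) =
     (if C ! (i - 1) then Some 0 else map_option Suc (stuck_pos (C[i - 1 := True]) w))"
| "stuck_pos C (LT i # w) = map_option Suc (stuck_pos (C[i - 1 := False]) w)"

definition blocking_type_P :: "bool list \<Rightarrow> lact list \<Rightarrow> nat \<Rightarrow> bool" where
  "blocking_type_P IS S i \<longleftrightarrow>
     (\<exists>n. stuck_pos IS S = Some n \<and> n < length S \<and> S ! n = LP i \<and>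
          (\<forall>m<n. S ! m \<noteq> LP i \<and> S ! m \<noteq> LT i))"

definition blocking_type_PP :: "bool list \<Rightarrow> lact list \<Rightarrow> nat \<Rightarrow> bool" where
  "blocking_type_PP IS S i \<longleftrightarrow>
     (\<exists>n. stuck_pos IS S = Some n \<and> n < length S \<and> S ! n = LP i \<and>
          (\<exists>m<n. S ! m = LP i \<or> S ! m = LT i))"

end

theory Submission
  imports Defs "HOL-Library.Sublist"
begin

(* The blocking type (P_1, P_2) forces both locks to be full initially.
   Run the translations u = tau(!) and v = tau(?) of ! | ? alternately, each as far as it goes.
   A coupling of runs from different lock configurations shows that u can only ever be
   blocked at P_1 and v only at P_2, and every turn makes progress.  Hence eventually either
   both are blocked, a deadlock contradicting must-convergence of !tick | ?tick, or one of
   them, say v, terminates.  Then a fresh copy of u started in place of v (the translation of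
   ?!U) either deadlocks against the waiting u or catches up with it.  Catching up yields two
   identical subprocesses whose endings tick and 0 can be exchanged, which transfers
   must-convergence of !tick | ?!0 into may-convergence of !0 | ?!tick, again a
   contradiction. *)

fun exec_word :: "bool list \<Rightarrow> lact list \<Rightarrow> bool list option" where
  "exec_word C [] = Some C"
| "exec_word C (LP i # w) = (if C ! (i - 1) then None else exec_word (C[i - 1 := True]) w)"
| "exec_word C (LT i # w) = exec_word (C[i - 1 := False]) w"

fun max_run :: "bool list \<Rightarrow> lact list \<Rightarrow> lact list \<times> bool list" where
  "max_run C [] = ([], C)"
| "max_run C (LP i # w) = (if C ! (i - 1) then (LP i # w, C) else max_run (C[i - 1 := True]) w)"
| "max_run C (LT i # w) = max_run (C[i - 1 := False]) w"

definition blocked :: "bool list \<Rightarrow> lact list \<Rightarrow> bool" where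
  "blocked C w \<longleftrightarrow> (\<exists>i v. w = LP i # v \<and> C ! (i - 1))"

lemma exec_word_steps:
  "exec_word C p = Some C' \<Longrightarrow> lock_step\<^sup>*\<^sup>* (add_mset (p @ w, e) M, C) (add_mset (w, e) M, C')"
proof (induction C p rule: exec_word.induct)
  case (2 C i p)
  then have free: "\<not> C ! (i - 1)" and rest: "exec_word (C[i - 1 := True]) p = Some C'"
    by (auto split: if_splits)
  from free have "lock_step (add_mset (LP i # p @ w, e) M, C) (add_mset (p @ w, e) M, C[i - 1 := True])"
    by (rule lock_P)
  with "2.IH"[OF free rest] show ?case by (simp add: converse_rtranclp_into_rtranclp)
next
  case (3 C i p)
  have "lock_step (add_mset (LT i # p @ w, e) M, C) (add_mset (p @ w, e) M, C[i - 1 := False])"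
    by (rule lock_T)
  with 3 show ?case by (auto intro: converse_rtranclp_into_rtranclp)
qed simp

lemma exec_word_length: "exec_word C p = Some C' \<Longrightarrow> length C' = length C"
  by (induction C p rule: exec_word.induct) (auto split: if_splits)

lemma max_run_split: "max_run C w = (w', C') \<Longrightarrow> \<exists>p. w = p @ w' \<and> exec_word C p = Some C'"
proof (induction C w rule: max_run.induct)
  case (2 C i w)
  then show ?case by (cases "C ! (i - 1)") (auto intro: exI[of _ "LP i # _"])
next
  case (3 C i w)
  then show ?case by (auto intro: exI[of _ "LT i # _"])
qed simp

lemma max_run_blocked: "max_run C w = (w', C') \<Longrightarrow> w' = [] \<or> blocked C' w'"
  by (induction C w rule: max_run.induct) (auto simp: blocked_def split: if_splits)

lemma max_run_length_le: "length (fst (max_run C w)) \<le> length w"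
  by (induction C w rule: max_run.induct) auto

lemma max_run_no_progress: "max_run C w = (w, C') \<Longrightarrow> C' = C"
  using max_run_split by fastforce

lemma max_run_through:
  "length (fst (max_run D (p @ x))) \<le> length x
   \<Longrightarrow> \<exists>Dx. exec_word D p = Some Dx \<and> max_run Dx x = max_run D (p @ x)"
proof (induction p arbitrary: D)
  case (Cons a p)
  then show ?case
    by (cases a) (auto split: if_splits)
qed simp

lemma max_run_coupling:
  assumes "valid_word (length C) w" "length D = length C" "1 \<le> i"
    and "max_run C w = (w', C')" "w' = [] \<or> (\<exists>v. w' = LP i # v)"
    and "\<forall>l < length C. l \<noteq> i - 1 \<longrightarrow> D ! l \<longrightarrow> C ! l"
  shows "length (fst (max_run D w)) \<le> length w' \<or> (\<exists>v. fst (max_run D w) = LP i # v)"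
  using assms
proof (induction w arbitrary: C D)
  case (Cons a w)
  have valid: "valid_word (length C) w" "1 \<le> lidx a" "lidx a \<le> length C"
    using Cons.prems(1) by (auto simp: valid_word_def)
  have still_dominated: "\<forall>l < length (C[lidx a - 1 := b]). l \<noteq> i - 1
      \<longrightarrow> D[lidx a - 1 := b] ! l \<longrightarrow> C[lidx a - 1 := b] ! l" for b
    using Cons.prems(2,6) valid(2,3) by (simp add: nth_list_update)
  show ?case
  proof (cases a)
    case (LP l)
    show ?thesis
    proof (cases "C ! (l - 1)")
      case True
      then show ?thesis
        using Cons.prems(4) LP max_run_length_le[of D "a # w"] by simp
    next
      case C_free: False
      show ?thesis
      proof (cases "D ! (l - 1)")
        case True
        moreover have "l - 1 < length C"
          using valid(2,3) LP by simp
        ultimately have "l - 1 = i - 1"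
          using C_free Cons.prems(6) by blast
        then have "l = i"
          using Cons.prems(3) valid(2) LP by simp
        then show ?thesis using True LP by simp
      next
        case False
        then show ?thesis
          using Cons.IH[of "C[l - 1 := True]" "D[l - 1 := True]"] Cons.prems(2-5)
            valid still_dominated C_free LP
          by simp
      qed
    qed
  next
    case (LT l)
    then show ?thesis
      using Cons.IH[of "C[l - 1 := False]" "D[l - 1 := False]"] Cons.prems(2-5) valid still_dominated
      by simp
  qed
qed simp

definition stops_before_only_at :: "nat \<Rightarrow> lact list \<Rightarrow> lact list \<Rightarrow> nat \<Rightarrow> bool" where
  "stops_before_only_at k w x i \<longleftrightarrow> (\<forall>D. length D = k \<longrightarrow> length x < length (fst (max_run D w))
      \<longrightarrow> (\<exists>v. fst (max_run D w) = LP i # v))"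

lemma stops_before_only_at_self: "stops_before_only_at k w w i"
  unfolding stops_before_only_at_def using max_run_length_le leD by blast

lemma stops_before_only_at_max_run:
  assumes "stops_before_only_at k w x i" "suffix x w" "valid_word k w" "length C = k" "1 \<le> i"
    and "max_run C x = (x', C')" "x' = [] \<or> (\<exists>v. x' = LP i # v)"
    and "\<forall>l < k. l \<noteq> i - 1 \<longrightarrow> C ! l"
  shows "stops_before_only_at k w x' i"
  unfolding stops_before_only_at_def
proof (intro allI impI)
  fix D :: "bool list"
  assume D: "length D = k" and beyond: "length x' < length (fst (max_run D w))"
  show "\<exists>v. fst (max_run D w) = LP i # v"
  proof (cases "length x < length (fst (max_run D w))")
    case True
    with assms(1) D show ?thesis unfolding stops_before_only_at_def by blast
  next
    case False
    obtain p where w: "w = p @ x" using assms(2) by (auto simp: suffix_def)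
    with False obtain Dx where "exec_word D p = Some Dx" and run: "max_run Dx x = max_run D w"
      using max_run_through[of D p x] by auto
    then have "length Dx = k" using exec_word_length D by simp
    moreover have "valid_word k x" using assms(3) w by (simp add: valid_word_def)
    ultimately show ?thesis
      using max_run_coupling[of C x Dx i x' C'] assms(4-8) run beyond by auto
  qed
qed

lemma stuck_pos_exec_word:
  "stuck_pos C w = Some n \<Longrightarrow> \<exists>C'. exec_word C (take n w) = Some C' \<and> blocked C' (drop n w)"
  by (induction C w arbitrary: n rule: stuck_pos.induct) (auto simp: blocked_def split: if_splits)

lemma exec_word_other_lock:
  "exec_word C p = Some C' \<Longrightarrow> \<forall>a\<in>set p. 1 \<le> lidx a \<and> lidx a \<noteq> i \<Longrightarrow> 1 \<le> i
   \<Longrightarrow> C' ! (i - 1) = C ! (i - 1)"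
proof (induction C p rule: exec_word.induct)
  case (2 C l p)
  then have "l - 1 \<noteq> i - 1" by auto
  with 2 show ?case by (auto split: if_splits)
next
  case (3 C l p)
  then have "l - 1 \<noteq> i - 1" by auto
  with 3 show ?case by auto
qed simp

lemma blocking_type_P_lock_full:
  assumes "valid_word k w" "1 \<le> i" "blocking_type_P C w i"
  shows "C ! (i - 1)"
proof -
  obtain n where stuck: "stuck_pos C w = Some n" and "n < length w" "w ! n = LP i"
    and before: "\<forall>m<n. w ! m \<noteq> LP i \<and> w ! m \<noteq> LT i"
    using assms(3) unfolding blocking_type_P_def by blast
  then have "drop n w = LP i # drop (Suc n) w" by (metis Cons_nth_drop_Suc)
  moreover obtain C' where exec: "exec_word C (take n w) = Some C'" and "blocked C' (drop n w)"
    using stuck_pos_exec_word[OF stuck] by blast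
  ultimately have "C' ! (i - 1)" by (simp add: blocked_def)
  moreover have "\<forall>a\<in>set (take n w). 1 \<le> lidx a \<and> lidx a \<noteq> i"
  proof
    fix a assume "a \<in> set (take n w)"
    then obtain m where "m < n" "m < length w" "a = w ! m" by (auto simp: in_set_conv_nth)
    then have "a \<noteq> LP i" "a \<noteq> LT i" "a \<in> set w" using before by auto
    with assms(1) show "1 \<le> lidx a \<and> lidx a \<noteq> i"
      by (cases a) (auto simp: valid_word_def)
  qed
  ultimately show ?thesis using exec_word_other_lock[OF exec] assms(2) by simp
qed

lemma stuck_pos_max_run: "stuck_pos C w = Some n \<Longrightarrow> fst (max_run C w) = drop n w"
  by (induction C w arbitrary: n rule: stuck_pos.induct) (auto split: if_splits)

lemma blocking_type_P_max_run: "blocking_type_P C w i \<Longrightarrow> \<exists>v. fst (max_run C w) = LP i # v"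
  unfolding blocking_type_P_def by (metis Cons_nth_drop_Suc stuck_pos_max_run)

definition pair_reach ::
  "lact list \<Rightarrow> lact list \<Rightarrow> bool list \<Rightarrow> lact list \<Rightarrow> lact list \<Rightarrow> bool list \<Rightarrow> bool" where
  "pair_reach x0 y0 C0 x y C \<longleftrightarrow> (\<forall>a b e1 e2.
     lock_step\<^sup>*\<^sup>* ({#(x0 @ a, e1), (y0 @ b, e2)#}, C0) ({#(x @ a, e1), (y @ b, e2)#}, C))"

lemma pair_reach_trans:
  "pair_reach x0 y0 C0 x1 y1 C1 \<Longrightarrow> pair_reach x1 y1 C1 x2 y2 C2 \<Longrightarrow> pair_reach x0 y0 C0 x2 y2 C2"
  unfolding pair_reach_def by (meson rtranclp_trans)

lemma pair_reach_swap: "pair_reach x0 y0 C0 x y C \<Longrightarrow> pair_reach y0 x0 C0 y x C"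
  unfolding pair_reach_def by (simp add: add_mset_commute)

lemma pair_reach_append:
  "pair_reach x0 y0 C0 x y C \<Longrightarrow> pair_reach (x0 @ a) (y0 @ b) C0 (x @ a) (y @ b) C"
  unfolding pair_reach_def by (metis append.assoc)

lemma pair_reach_exec_fst: "exec_word C p = Some C' \<Longrightarrow> pair_reach (p @ x) y C x y C'"
  unfolding pair_reach_def using exec_word_steps by fastforce

lemma pair_reach_exec_snd: "exec_word C p = Some C' \<Longrightarrow> pair_reach x (p @ y) C x y C'"
  by (rule pair_reach_swap) (rule pair_reach_exec_fst)

lemma pair_reach_steps:
  "pair_reach x0 y0 C0 x y C \<Longrightarrow> lock_step\<^sup>*\<^sup>* ({#(x0, e1), (y0, e2)#}, C0) ({#(x, e1), (y, e2)#}, C)"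
  unfolding pair_reach_def by (elim allE[of _ "[]"]) simp

definition reaches_deadlock :: "lact list \<Rightarrow> lact list \<Rightarrow> bool list \<Rightarrow> bool" where
  "reaches_deadlock u v C0 \<longleftrightarrow> (\<exists>x y C. pair_reach u v C0 x y C \<and> blocked C x \<and> blocked C y)"

definition reaches_diagonal :: "lact list \<Rightarrow> lact list \<Rightarrow> bool list \<Rightarrow> bool" where
  "reaches_diagonal u v C0 \<longleftrightarrow> (\<exists>x C. pair_reach u v C0 x x C)"

text \<open>The second subprocess v @ u is the translation of ?!U: once v has terminated,
  a fresh copy of u runs in its place.\<close>
definition rerun_conflict :: "lact list \<Rightarrow> lact list \<Rightarrow> bool list \<Rightarrow> bool" where
  "rerun_conflict u v C0 \<longleftrightarrow> reaches_deadlock u (v @ u) C0 \<or> reaches_diagonal u (v @ u) C0"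

lemma reaches_deadlock_swap: "reaches_deadlock u v C0 \<Longrightarrow> reaches_deadlock v u C0"
  unfolding reaches_deadlock_def using pair_reach_swap by blast

lemma rerun_conflict_if_snd_done:
  assumes reach: "pair_reach u v C0 x [] C" and "suffix x u"
    and stops: "stops_before_only_at (length C) u x i" and x: "x = LP i # xv"
  shows "rerun_conflict u v C0"
proof -
  have rerun: "pair_reach u (v @ u) C0 x u C"
    using pair_reach_append[OF reach, of "[]" u] by simp
  obtain z D where run: "max_run C u = (z, D)" by fastforce
  show ?thesis
  proof (cases "length z \<le> length x")
    case True
    obtain p where u: "u = p @ x" using \<open>suffix x u\<close> by (auto simp: suffix_def)
    with True run obtain Dx where "exec_word C p = Some Dx"
      using max_run_through[of C p x] by auto
    then have "pair_reach x u C x x Dx" using pair_reach_exec_snd u by blast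
    then have "reaches_diagonal u (v @ u) C0"
      unfolding reaches_diagonal_def using pair_reach_trans[OF rerun] by blast
    then show ?thesis unfolding rerun_conflict_def by blast
  next
    case False
    then obtain zv where z: "z = LP i # zv"
      using stops run unfolding stops_before_only_at_def by fastforce
    then have "blocked D z" using max_run_blocked[OF run] by simp
    then have "blocked D x" using x z by (simp add: blocked_def)
    obtain p where "u = p @ z" "exec_word C p = Some D" using max_run_split[OF run] by blast
    then have "pair_reach x u C x z D" using pair_reach_exec_snd by blast
    with \<open>blocked D x\<close> \<open>blocked D z\<close> have "reaches_deadlock u (v @ u) C0"
      unfolding reaches_deadlock_def using pair_reach_trans[OF rerun] by blast
    then show ?thesis unfolding rerun_conflict_def by blast
  qed
qed

lemma valid_word_LP_mem: "valid_word k w \<Longrightarrow> LP l \<in> set w \<Longrightarrow> 1 \<le> l \<and> l \<le> k"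
  unfolding valid_word_def by fastforce

lemma alternation_step:
  assumes "valid_word 2 u" "valid_word 2 v" "{i, j} = {1, 2::nat}"
    and reach: "pair_reach u v C0 x y C" and "suffix x u" "suffix y v" "length C = 2"
    and "stops_before_only_at 2 u x i" "stops_before_only_at 2 v y j"
    and x: "x = LP i # xv" and "C ! (i - 1)"
  obtains "reaches_deadlock u v C0" | "rerun_conflict u v C0"
  | y' C' yv where "pair_reach u v C0 x y' C'" "suffix y' v" "length C' = 2" "length y' < length y"
      "stops_before_only_at 2 v y' j" "y' = LP j # yv" "C' ! (j - 1)"
proof -
  obtain y' C' where run: "max_run C y = (y', C')" by fastforce
  obtain q where y: "y = q @ y'" and exec: "exec_word C q = Some C'"
    using max_run_split[OF run] by blast
  have reach': "pair_reach u v C0 x y' C'"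
    using pair_reach_trans[OF reach] pair_reach_exec_snd[OF exec] y by blast
  have "length C' = 2" using exec_word_length[OF exec] \<open>length C = 2\<close> by simp
  have "suffix y' v" using \<open>suffix y v\<close> y by (auto simp: suffix_def)
  consider "y' = []" | l yv where "y' = LP l # yv" "C' ! (l - 1)"
    using max_run_blocked[OF run] by (auto simp: blocked_def)
  then show thesis
  proof cases
    case 1
    with reach' have "rerun_conflict u v C0"
      using rerun_conflict_if_snd_done[of u v C0 x C' i xv] \<open>suffix x u\<close> \<open>length C' = 2\<close> assms(8) x
      by simp
    then show thesis by (rule that(2))
  next
    case (2 l yv)
    show thesis
    proof (cases "C' ! (i - 1)")
      case True
      then have "blocked C' x" "blocked C' y'" using x 2 by (auto simp: blocked_def)
      then have "reaches_deadlock u v C0"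
        unfolding reaches_deadlock_def using reach' by blast
      then show thesis by (rule that(1))
    next
      case False
      have "1 \<le> l \<and> l \<le> 2"
        using valid_word_LP_mem[OF assms(2)] \<open>suffix y' v\<close> 2 by (auto simp: suffix_def)
      moreover have "l \<noteq> i" using False 2 by auto
      ultimately have "l = j" using assms(3) by (auto simp: doubleton_eq_iff)
      have "y' \<noteq> y" using False \<open>C ! (i - 1)\<close> run max_run_no_progress by blast
      then have "length y' < length y" using y by simp
      have "stops_before_only_at 2 v y' j"
        using stops_before_only_at_max_run[OF assms(9,6,2,7) _ run] assms(3,11) 2 \<open>l = j\<close>
        by (auto simp: doubleton_eq_iff less_2_cases_iff)
      then show thesis
        using that(3) reach' \<open>suffix y' v\<close> \<open>length C' = 2\<close> \<open>length y' < length y\<close> 2 \<open>l = j\<close>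
        by blast
    qed
  qed
qed

lemma alternation:
  assumes "valid_word 2 u" "valid_word 2 v" "{i, j} = {1, 2::nat}"
    and "pair_reach u v C0 x y C" "suffix x u" "suffix y v" "length C = 2"
    and "stops_before_only_at 2 u x i" "stops_before_only_at 2 v y j"
    and "x = LP i # xv" "C ! (i - 1)"
  shows "reaches_deadlock u v C0 \<or> rerun_conflict u v C0 \<or> rerun_conflict v u C0"
  using assms
proof (induction "length x + length y" arbitrary: u v i j x y C xv rule: less_induct)
  case less
  from less.prems show ?case
  proof (cases rule: alternation_step)
    case (3 y' C' yv)
    have "reaches_deadlock v u C0 \<or> rerun_conflict v u C0 \<or> rerun_conflict u v C0"
    proof (rule less.hyps)
      show "length y' + length x < length x + length y" using 3 by simp
      show "{j, i} = {1, 2::nat}" using less.prems(3) by auto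
      show "pair_reach v u C0 y' x C'" using 3 by (simp add: pair_reach_swap)
    qed (use less.prems 3 in auto)
    then show ?thesis using reaches_deadlock_swap by blast
  qed simp_all
qed

lemma blocking_types_P1_P2_trap:
  assumes "valid_word 2 w1" "valid_word 2 w2" "length IS = 2"
    and "blocking_type_P IS w1 1" "blocking_type_P IS w2 2"
  shows "reaches_deadlock w1 w2 IS \<or> rerun_conflict w1 w2 IS \<or> rerun_conflict w2 w1 IS"
proof -
  have IS_full: "\<forall>l < 2. l \<noteq> 1 - 1 \<longrightarrow> IS ! l"
    using blocking_type_P_lock_full[OF assms(2) _ assms(5)] by (simp add: less_2_cases_iff)
  obtain x C where run: "max_run IS w1 = (x, C)" by fastforce
  then obtain xv where x: "x = LP 1 # xv"
    using blocking_type_P_max_run[OF assms(4)] by auto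
  then have "C ! (1 - 1)" using max_run_blocked[OF run] by (simp add: blocked_def)
  obtain p where w1: "w1 = p @ x" and exec: "exec_word IS p = Some C"
    using max_run_split[OF run] by blast
  have "stops_before_only_at 2 w1 x 1"
    using stops_before_only_at_max_run[OF stops_before_only_at_self _ assms(1,3) _ run] x IS_full
    by simp
  moreover have "pair_reach w1 w2 IS x w2 C" using pair_reach_exec_fst[OF exec] w1 by simp
  moreover have "length C = 2" using exec_word_length[OF exec] assms(3) by simp
  ultimately show ?thesis
    using alternation[OF assms(1,2), of 1 2 IS x w2 C xv] stops_before_only_at_self
      \<open>C ! (1 - 1)\<close> w1 x by (simp add: suffix_def)
qed

lemma blocked_pair_no_step:
  assumes "blocked C x" "blocked C y"
  shows "\<not> lock_step ({#(x, e1), (y, e2)#}, C) S"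
proof
  assume "lock_step ({#(x, e1), (y, e2)#}, C) S"
  then show False
  proof cases
    case (lock_P i w e M)
    then have "(LP i # w, e) \<in># {#(x, e1), (y, e2)#}" by simp
    with \<open>\<not> C ! (i - 1)\<close> assms show False by (auto simp: blocked_def)
  next
    case (lock_T i w e M)
    then have "(LT i # w, e) \<in># {#(x, e1), (y, e2)#}" by simp
    with assms show False by (auto simp: blocked_def)
  qed
qed

lemma reaches_deadlock_not_must:
  assumes "reaches_deadlock u v C0"
  shows "\<not> lock_must_state ({#(u, e1), (v, e2)#}, C0)"
proof
  assume must: "lock_must_state ({#(u, e1), (v, e2)#}, C0)"
  obtain x y C where reach: "pair_reach u v C0 x y C" and dead: "blocked C x" "blocked C y"
    using assms unfolding reaches_deadlock_def by blast
  from reach have "lock_step\<^sup>*\<^sup>* ({#(u, e1), (v, e2)#}, C0) ({#(x, e1), (y, e2)#}, C)"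
    by (rule pair_reach_steps)
  with must obtain S where steps: "lock_step\<^sup>*\<^sup>* ({#(x, e1), (y, e2)#}, C) S"
    and "lock_successful S"
    unfolding lock_must_state_def lock_may_state_def by blast
  from steps have "S = ({#(x, e1), (y, e2)#}, C)"
    by (cases rule: converse_rtranclpE) (use blocked_pair_no_step[OF dead] in blast)+
  with \<open>lock_successful S\<close> have "lock_successful ({#(x, e1), (y, e2)#}, C)" by simp
  with dead show False by (auto simp: lock_successful_def blocked_def)
qed

lemma reaches_diagonal_swap_endings:
  assumes "reaches_diagonal u v C0" "lock_must_state ({#(u, e1), (v, e2)#}, C0)"
  shows "lock_may_state ({#(u, e2), (v, e1)#}, C0)"
proof -
  obtain x C where reach: "pair_reach u v C0 x x C"
    using assms(1) unfolding reaches_diagonal_def by blast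
  have "lock_step\<^sup>*\<^sup>* ({#(u, e1), (v, e2)#}, C0) ({#(x, e1), (x, e2)#}, C)"
    using pair_reach_steps[OF reach] .
  moreover have "lock_step\<^sup>*\<^sup>* ({#(u, e2), (v, e1)#}, C0) ({#(x, e1), (x, e2)#}, C)"
    using pair_reach_steps[OF reach, of e2 e1] by (simp add: add_mset_commute)
  ultimately show ?thesis
    using assms(2) unfolding lock_must_state_def lock_may_state_def by (meson rtranclp_trans)
qed

lemma rerun_conflict_swap_endings:
  assumes "rerun_conflict u v C0" "lock_must_state ({#(u, e1), (v @ u, e2)#}, C0)"
  shows "lock_may_state ({#(u, e2), (v @ u, e1)#}, C0)"
  using assms reaches_deadlock_not_must reaches_diagonal_swap_endings
  unfolding rerun_conflict_def by blast

lemma sync_stuck_if_no_send_or_recv: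
  "(\<forall>u. SSend u \<notin># P) \<or> (\<forall>u. SRecv u \<notin># P) \<Longrightarrow> \<not> sync_step P Q"
  by (auto elim!: sync_step.cases)

lemma sync_step_pair: "sync_step {#SSend a, SRecv b#} Q \<longleftrightarrow> Q = {#a, b#}"
proof
  assume "sync_step {#SSend a, SRecv b#} Q"
  then show "Q = {#a, b#}"
    by cases (auto simp: add_eq_conv_ex)
next
  assume "Q = {#a, b#}"
  then show "sync_step {#SSend a, SRecv b#} Q"
    using sync_step.intros[of a b "{#}"] by simp
qed

lemma sync_steps_from_stuck: "sync_step\<^sup>*\<^sup>* P Q \<Longrightarrow> (\<And>Q. \<not> sync_step P Q) \<Longrightarrow> Q = P"
  by (erule converse_rtranclpE) auto

lemma sync_may_stuck: "(\<And>Q. \<not> sync_step P Q) \<Longrightarrow> sync_may P \<longleftrightarrow> SCheck \<in># P"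
  unfolding sync_may_def sync_successful_def using sync_steps_from_stuck by blast

lemma sync_steps_stuck_pair:
  assumes "\<And>Q. \<not> sync_step {#a, b#} Q"
  shows "sync_step\<^sup>*\<^sup>* {#SSend a, SRecv b#} Q \<longleftrightarrow> Q = {#SSend a, SRecv b#} \<or> Q = {#a, b#}"
proof
  assume "sync_step\<^sup>*\<^sup>* {#SSend a, SRecv b#} Q"
  then show "Q = {#SSend a, SRecv b#} \<or> Q = {#a, b#}"
    by (induction rule: rtranclp_induct) (use assms sync_step_pair in auto)
next
  assume "Q = {#SSend a, SRecv b#} \<or> Q = {#a, b#}"
  then show "sync_step\<^sup>*\<^sup>* {#SSend a, SRecv b#} Q"
    using sync_step_pair by auto
qed

lemma sync_may_must_stuck_pair:
  assumes "\<And>Q. \<not> sync_step {#a, b#} Q"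
  shows "sync_may {#SSend a, SRecv b#} \<longleftrightarrow> SCheck \<in># {#a, b#}"
    and "sync_must {#SSend a, SRecv b#} \<longleftrightarrow> SCheck \<in># {#a, b#}"
proof -
  show may: "sync_may {#SSend a, SRecv b#} \<longleftrightarrow> SCheck \<in># {#a, b#}"
    unfolding sync_may_def sync_successful_def sync_steps_stuck_pair[OF assms] by auto
  show "sync_must {#SSend a, SRecv b#} \<longleftrightarrow> SCheck \<in># {#a, b#}"
    unfolding sync_must_def sync_steps_stuck_pair[OF assms]
    using may sync_may_stuck[OF assms] by auto
qed

lemma correct_translation_stuck_pair:
  assumes "correct_translation IS w1 w2" "\<And>Q. \<not> sync_step {#a, b#} Q"
  shows "lock_may IS (tr_proc w1 w2 {#SSend a, SRecv b#}) \<longleftrightarrow> SCheck \<in># {#a, b#}"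
    and "lock_must IS (tr_proc w1 w2 {#SSend a, SRecv b#}) \<longleftrightarrow> SCheck \<in># {#a, b#}"
  using assms(1) sync_may_must_stuck_pair[OF assms(2)] unfolding correct_translation_def by blast+

lemma correct_translation_no_trap:
  assumes "correct_translation IS w1 w2"
  shows "\<not> (reaches_deadlock w1 w2 IS \<or> rerun_conflict w1 w2 IS \<or> rerun_conflict w2 w1 IS)"
proof -
  note stuck_pair = correct_translation_stuck_pair[OF assms sync_stuck_if_no_send_or_recv]
  have must_w1_w2: "lock_must_state ({#(w1, LCheck), (w2, LCheck)#}, IS)"
    using stuck_pair(2)[of SCheck SCheck] by (auto simp: tr_proc_def lock_must_def)
  have must_w1_w2w1: "lock_must_state ({#(w1, LCheck), (w2 @ w1, LZero)#}, IS)"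
    using stuck_pair(2)[of SCheck "SSend SZero"] by (auto simp: tr_proc_def lock_must_def)
  have not_may_w1_w2w1: "\<not> lock_may_state ({#(w1, LZero), (w2 @ w1, LCheck)#}, IS)"
    using stuck_pair(1)[of SZero "SSend SCheck"] by (auto simp: tr_proc_def lock_may_def)
  have must_w2_w1w2: "lock_must_state ({#(w2, LCheck), (w1 @ w2, LZero)#}, IS)"
    using stuck_pair(2)[of "SRecv SZero" SCheck]
    by (auto simp: tr_proc_def lock_must_def add_mset_commute)
  have not_may_w2_w1w2: "\<not> lock_may_state ({#(w2, LZero), (w1 @ w2, LCheck)#}, IS)"
    using stuck_pair(1)[of "SRecv SCheck" SZero]
    by (auto simp: tr_proc_def lock_may_def add_mset_commute)
  show ?thesis
    using reaches_deadlock_not_must[of w1 w2 IS] must_w1_w2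
      rerun_conflict_swap_endings[OF _ must_w1_w2w1] not_may_w1_w2w1
      rerun_conflict_swap_endings[OF _ must_w2_w1w2] not_may_w2_w1w2
    by blast
qed

theorem proposition5p16:
  fixes IS :: "bool list"
  assumes "length IS = 2"
  shows "\<not> (\<exists>w1 w2. compositional_translation 2 w1 w2
              \<and> correct_translation IS w1 w2
              \<and> blocking_type_P IS w1 1 \<and> blocking_type_P IS w2 2)"
proof
  assume "\<exists>w1 w2. compositional_translation 2 w1 w2
              \<and> correct_translation IS w1 w2
              \<and> blocking_type_P IS w1 1 \<and> blocking_type_P IS w2 2"
  then obtain w1 w2 where "valid_word 2 w1" "valid_word 2 w2" "correct_translation IS w1 w2"
    and "blocking_type_P IS w1 1" "blocking_type_P IS w2 2"
    unfolding compositional_translation_def by blast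
  then show False
    using blocking_types_P1_P2_trap assms correct_translation_no_trap by blast
qed

end
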